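(* The asynchronous subtyping relation $\leqslant$ on session trees is reflexive and transitive.
   Context: Sorts: $\mathsf{S} ::= \mathtt{nat} \mid \mathtt{int} \mid \mathtt{bool} \mid \mathtt{unit}$; subsorting $\leq:$ is the least reflexive relation on sorts with $\mathtt{nat}\leq:\mathtt{int}$. Session trees are the possibly infinite terms generated coinductively by $\mathsf{T} ::= \mathtt{end} \mid \&_{i\in I}\mathsf{p}?\ell_i(\mathsf{S}_i).\mathsf{T}_i \mid \oplus_{i\in I}\mathsf{p}!\ell_i(\mathsf{S}_i).\mathsf{T}_i$ with $I$ finite nonempty and labels $\ell_i$ pairwise distinct ($\&$: branching, i.e. input from $\mathsf{p}$; $\oplus$: selection, i.e. output to $\mathsf{p}$). SISO trees: $\mathsf{W} ::= \mathtt{end} \mid \mathsf{p}?\ell(\mathsf{S}).\mathsf{W} \mid \mathsf{p}!\ell(\mathsf{S}).\mathsf{W}$ (coinductively); $\mathrm{act}(\mathsf{W})$ is the set of symbols $\mathsf{p}?$ (resp. $\mathsf{p}!$) for inputs from (resp. outputs to) $\mathsf{p}$ occurring in $\mathsf{W}$. $\mathcal{A}^{(\mathsf{p})}$: nonempty finite sequences of inputs $\mathsf{q}?\ell(\mathsf{S})$ with $\mathsf{q}\neq\mathsf{p}$; $\mathcal{B}^{(\mathsf{p})}$: nonempty finite sequences of inputs $\mathsf{r}?\ell(\mathsf{S})$ (any $\mathsf{r}$) and outputs $\mathsf{q}!\ell(\mathsf{S})$ with $\mathsf{q}\neq\mathsf{p}$, used as prefixes. SISO refinement $\lesssim$: the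 largest relation on SISO trees closed backward under: $\mathsf{p}?\ell(\mathsf{S}).\mathsf{W}\lesssim\mathsf{p}?\ell(\mathsf{S}').\mathsf{W}'$ if $\mathsf{S}'\leq:\mathsf{S}$, $\mathsf{W}\lesssim\mathsf{W}'$; $\mathsf{p}?\ell(\mathsf{S}).\mathsf{W}\lesssim\mathcal{A}^{(\mathsf{p})}.\mathsf{p}?\ell(\mathsf{S}').\mathsf{W}'$ if $\mathsf{S}'\leq:\mathsf{S}$, $\mathsf{W}\lesssim\mathcal{A}^{(\mathsf{p})}.\mathsf{W}'$, $\mathrm{act}(\mathsf{W})=\mathrm{act}(\mathcal{A}^{(\mathsf{p})}.\mathsf{W}')$; $\mathsf{p}!\ell(\mathsf{S}).\mathsf{W}\lesssim\mathsf{p}!\ell(\mathsf{S}').\mathsf{W}'$ if $\mathsf{S}\leq:\mathsf{S}'$, $\mathsf{W}\lesssim\mathsf{W}'$; $\mathsf{p}!\ell(\mathsf{S}).\mathsf{W}\lesssim\mathcal{B}^{(\mathsf{p})}.\mathsf{p}!\ell(\mathsf{S}').\mathsf{W}'$ if $\mathsf{S}\leq:\mathsf{S}'$, $\mathsf{W}\lesssim\mathcal{B}^{(\mathsf{p})}.\mathsf{W}'$, $\mathrm{act}(\mathsf{W})=\mathrm{act}(\mathcal{B}^{(\mathsf{p})}.\mathsf{W}')$; $\mathtt{end}\lesssim\mathtt{end}$. SO trees $\mathsf{U} ::= \mathtt{end} \mid \&_{i\in I}\mathsf{p}?\ell_i(\mathsf{S}_i).\mathsf{U}_i \mid \mathsf{p}!\ell(\mathsf{S}).\mathsf{U}$;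 SI trees $\mathsf{V} ::= \mathtt{end} \mid \mathsf{p}?\ell(\mathsf{S}).\mathsf{V} \mid \oplus_{i\in I}\mathsf{p}!\ell_i(\mathsf{S}_i).\mathsf{V}_i$. Decompositions (coinductively): $[\![\mathtt{end}]\!]_{SO}=\{\mathtt{end}\}$, $[\![\oplus_{i\in I}\mathsf{p}!\ell_i(\mathsf{S}_i).\mathsf{T}_i]\!]_{SO}=\{\mathsf{p}!\ell_i(\mathsf{S}_i).\mathsf{U}: i\in I,\mathsf{U}\in[\![\mathsf{T}_i]\!]_{SO}\}$, $[\![\&_{i\in I}\mathsf{p}?\ell_i(\mathsf{S}_i).\mathsf{T}_i]\!]_{SO}=\{\&_{i\in I}\mathsf{p}?\ell_i(\mathsf{S}_i).\mathsf{U}_i: \mathsf{U}_i\in[\![\mathsf{T}_i]\!]_{SO}\}$; $[\![\mathtt{end}]\!]_{SI}=\{\mathtt{end}\}$, $[\![\&_{i\in I}\mathsf{p}?\ell_i(\mathsf{S}_i).\mathsf{T}_i]\!]_{SI}=\{\mathsf{p}?\ell_i(\mathsf{S}_i).\mathsf{V}: i\in I,\mathsf{V}\in[\![\mathsf{T}_i]\!]_{SI}\}$, $[\![\oplus_{i\in I}\mathsf{p}!\ell_i(\mathsf{S}_i).\mathsf{T}_i]\!]_{SI}=\{\oplus_{i\in I}\mathsf{p}!\ell_i(\mathsf{S}_i).\mathsf{V}_i: \mathsf{V}_i\in[\![\mathsf{T}_i]\!]_{SI}\}$. (Applying $[\![\cdot]\!]_{SI}$ to an SO tree or $[\![\cdot]\!]_{SO}$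 to an SI tree yields SISO trees.) The asynchronous subtyping: $\mathsf{T}\leqslant\mathsf{T}'$ iff for all $\mathsf{U}\in[\![\mathsf{T}]\!]_{SO}$ and $\mathsf{V}'\in[\![\mathsf{T}']\!]_{SI}$ there exist $\mathsf{W}\in[\![\mathsf{U}]\!]_{SI}$ and $\mathsf{W}'\in[\![\mathsf{V}']\!]_{SO}$ with $\mathsf{W}\lesssim\mathsf{W}'$. *)

theory Defs
  imports Main "HOL-Library.Finite_Map"
begin

datatype sort = SNat | SInt | SBool | SUnit

definition subsort :: "sort \<Rightarrow> sort \<Rightarrow> bool" where
  "subsort S S' \<longleftrightarrow> S = S' \<or> (S = SNat \<and> S' = SInt)"

(* A branching/selection is a finite map from
   labels to (payload sort, continuation); labels are thus pairwise distinct and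
   the index set finite.  Nonemptiness is imposed by wf_stree. *)
codatatype ('p, 'l) stree =
    End
  | Bra 'p "('l, sort \<times> ('p, 'l) stree) fmap"
  | Sel 'p "('l, sort \<times> ('p, 'l) stree) fmap"

coinductive wf_stree :: "('p, 'l) stree \<Rightarrow> bool" where
  wf_end: "wf_stree End"
| wf_bra: "fmdom m \<noteq> {||} \<Longrightarrow> (\<forall>l S T. fmlookup m l = Some (S, T) \<longrightarrow> wf_stree T)
           \<Longrightarrow> wf_stree (Bra p m)"
| wf_sel: "fmdom m \<noteq> {||} \<Longrightarrow> (\<forall>l S T. fmlookup m l = Some (S, T) \<longrightarrow> wf_stree T)
           \<Longrightarrow> wf_stree (Sel p m)"

codatatype ('p, 'l) siso =
    WEnd
  | WIn 'p 'l sort "('p, 'l) siso"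
  | WOut 'p 'l sort "('p, 'l) siso"

primcorec siso_to_stree :: "('p, 'l) siso \<Rightarrow> ('p, 'l) stree" where
  "siso_to_stree W = (case W of
      WEnd \<Rightarrow> End
    | WIn p l S W' \<Rightarrow> Bra p (fmmap (\<lambda>X. (S, siso_to_stree X)) (fmupd l W' fmempty))
    | WOut p l S W' \<Rightarrow> Sel p (fmmap (\<lambda>X. (S, siso_to_stree X)) (fmupd l W' fmempty)))"

(* so_dec T U  means  U \<in> [[T]]_SO *)
coinductive so_dec :: "('p, 'l) stree \<Rightarrow> ('p, 'l) stree \<Rightarrow> bool" where
  so_end: "so_dec End End"
| so_sel: "fmlookup m l = Some (S, T) \<Longrightarrow> so_dec T U
           \<Longrightarrow> so_dec (Sel p m) (Sel p (fmupd l (S, U) fmempty))"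
| so_bra: "fmdom m' = fmdom m \<Longrightarrow>
           (\<forall>l S T. fmlookup m l = Some (S, T) \<longrightarrow>
               (\<exists>U. fmlookup m' l = Some (S, U) \<and> so_dec T U))
           \<Longrightarrow> so_dec (Bra p m) (Bra p m')"

(* si_dec T V  means  V \<in> [[T]]_SI *)
coinductive si_dec :: "('p, 'l) stree \<Rightarrow> ('p, 'l) stree \<Rightarrow> bool" where
  si_end: "si_dec End End"
| si_bra: "fmlookup m l = Some (S, T) \<Longrightarrow> si_dec T V
           \<Longrightarrow> si_dec (Bra p m) (Bra p (fmupd l (S, V) fmempty))"
| si_sel: "fmdom m' = fmdom m \<Longrightarrow>
           (\<forall>l S T. fmlookup m l = Some (S, T) \<longrightarrow>
               (\<exists>V. fmlookup m' l = Some (S, V) \<and> si_dec T V))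
           \<Longrightarrow> si_dec (Sel p m) (Sel p m')"

datatype ('p, 'l) action = AIn 'p 'l sort | AOut 'p 'l sort

fun prefix :: "('p, 'l) action list \<Rightarrow> ('p, 'l) siso \<Rightarrow> ('p, 'l) siso" where
  "prefix [] W = W"
| "prefix (AIn q l S # as) W = WIn q l S (prefix as W)"
| "prefix (AOut q l S # as) W = WOut q l S (prefix as W)"

definition is_A :: "'p \<Rightarrow> ('p, 'l) action list \<Rightarrow> bool" where
  "is_A p as \<longleftrightarrow> as \<noteq> [] \<and> (\<forall>a \<in> set as. \<exists>q l S. a = AIn q l S \<and> q \<noteq> p)"

definition is_B :: "'p \<Rightarrow> ('p, 'l) action list \<Rightarrow> bool" where
  "is_B p as \<longleftrightarrow> as \<noteq> [] \<and>
     (\<forall>a \<in> set as. (\<exists>r l S. a = AIn r l S) \<or> (\<exists>q l S. a = AOut q l S \<and> q \<noteq> p))"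

datatype 'p act_sym = InSym 'p | OutSym 'p

inductive in_act :: "'p act_sym \<Rightarrow> ('p, 'l) siso \<Rightarrow> bool" where
  "in_act (InSym p) (WIn p l S W)"
| "in_act (OutSym p) (WOut p l S W)"
| "in_act a W \<Longrightarrow> in_act a (WIn q l S W)"
| "in_act a W \<Longrightarrow> in_act a (WOut q l S W)"

definition act :: "('p, 'l) siso \<Rightarrow> 'p act_sym set" where
  "act W = {a. in_act a W}"

coinductive refines :: "('p, 'l) siso \<Rightarrow> ('p, 'l) siso \<Rightarrow> bool" where
  ref_in: "subsort S' S \<Longrightarrow> refines W W'
           \<Longrightarrow> refines (WIn p l S W) (WIn p l S' W')"
| ref_in_A: "is_A p A \<Longrightarrow> subsort S' S \<Longrightarrow> refines W (prefix A W')
           \<Longrightarrow> act W = act (prefix A W')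
           \<Longrightarrow> refines (WIn p l S W) (prefix A (WIn p l S' W'))"
| ref_out: "subsort S S' \<Longrightarrow> refines W W'
           \<Longrightarrow> refines (WOut p l S W) (WOut p l S' W')"
| ref_out_B: "is_B p B \<Longrightarrow> subsort S S' \<Longrightarrow> refines W (prefix B W')
           \<Longrightarrow> act W = act (prefix B W')
           \<Longrightarrow> refines (WOut p l S W) (prefix B (WOut p l S' W'))"
| ref_end: "refines WEnd WEnd"

definition async_sub :: "('p, 'l) stree \<Rightarrow> ('p, 'l) stree \<Rightarrow> bool" where
  "async_sub T T' \<longleftrightarrow>
     (\<forall>U V'. so_dec T U \<longrightarrow> si_dec T' V' \<longrightarrow>
        (\<exists>W W'. si_dec U (siso_to_stree W) \<and> so_dec V' (siso_to_stree W') \<and> refines W W'))"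

end

(*
  Reflexivity: an SO-decomposition U and an SI-decomposition V of the same tree share a path,
  which at a branching takes the single label kept by V and at a selection the single label
  kept by U.  It lies in [[U]]_SI and in [[V]]_SO, and SISO refinement is reflexive.

  Transitivity: SISO refinement is transitive, since an action that a refinement anticipates
  can be pushed through a second refinement.  Given U1 in [[T1]]_SO and V3 in [[T3]]_SI, the
  two hypotheses have to be applied to decompositions of T2 whose paths coincide.  Let V2 in
  [[T2]]_SI keep, at each branching, the input label that can still be matched against V3
  after the history leading there; T1 <= T2 gives W1 refining W2 in [[V2]]_SO.  Let U2 in
  [[T2]]_SO select along W2; T2 <= T3 gives W2' in [[U2]]_SI refining W3 in [[V3]]_SO.  Two
  SO-paths of V3 can only part at a selection, so refinement admits at most one matchable
  input label after a given history; hence W2' is an SO-path of V2 too, which forces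
  W2' = W2 and so W1 refines W3.
*)
theory Submission
  imports Defs
begin

section \<open>Action sequences\<close>

fun action_symbol :: "('p, 'l) action \<Rightarrow> 'p act_sym" where
  "action_symbol (AIn p l S) = InSym p"
| "action_symbol (AOut p l S) = OutSym p"

fun action_label :: "('p, 'l) action \<Rightarrow> 'l" where
  "action_label (AIn p l S) = l"
| "action_label (AOut p l S) = l"

text \<open>\<open>may_overtake s t\<close>: a refining tree may anticipate an \<open>s\<close>-action before a
  \<open>t\<close>-action.\<close>

fun may_overtake :: "'p act_sym \<Rightarrow> 'p act_sym \<Rightarrow> bool" where
  "may_overtake (InSym q) (InSym p) \<longleftrightarrow> q \<noteq> p"
| "may_overtake (OutSym q) (InSym p) \<longleftrightarrow> False"
| "may_overtake (InSym q) (OutSym p) \<longleftrightarrow> True"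
| "may_overtake (OutSym q) (OutSym p) \<longleftrightarrow> q \<noteq> p"

abbreviation overtaking :: "'p act_sym \<Rightarrow> ('p, 'l) action list \<Rightarrow> bool" where
  "overtaking s A \<equiv> list_all (\<lambda>c. may_overtake (action_symbol c) s) A"

lemma may_overtake_irrefl: "\<not> may_overtake s s"
  by (cases s) auto

lemma is_A_iff:
  fixes A :: "('p, 'l) action list"
  shows "is_A p A \<longleftrightarrow> A \<noteq> [] \<and> overtaking (InSym p) A"
proof -
  have "may_overtake (action_symbol a) (InSym p) \<longleftrightarrow> (\<exists>q l S. a = AIn q l S \<and> q \<noteq> p)"
    for a :: "('p, 'l) action"
    by (cases a) auto
  then show ?thesis
    by (simp add: is_A_def list_all_iff)
qed

lemma is_B_iff:
  fixes B :: "('p, 'l) action list"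
  shows "is_B p B \<longleftrightarrow> B \<noteq> [] \<and> overtaking (OutSym p) B"
proof -
  have "may_overtake (action_symbol a) (OutSym p) \<longleftrightarrow>
      (\<exists>r l S. a = AIn r l S) \<or> (\<exists>q l S. a = AOut q l S \<and> q \<noteq> p)"
    for a :: "('p, 'l) action"
    by (cases a) auto
  then show ?thesis
    by (simp add: is_B_def list_all_iff)
qed

lemma prefix_append [simp]: "prefix (A @ B) W = prefix A (prefix B W)"
proof (induction A)
  case (Cons a A)
  then show ?case by (cases a) auto
qed simp

lemma prefix_single_prefix: "prefix [a] (prefix A W) = prefix (a # A) W"
  by (cases a) auto

lemma prefix_Cons_append [simp]: "prefix (a # A @ B) W = prefix [a] (prefix A (prefix B W))"
  by (cases a) simp_all

lemma prefix_Cons_eq_iff [simp]: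
  "prefix (a # A) X = prefix (b # B) Y \<longleftrightarrow> a = b \<and> prefix A X = prefix B Y"
  by (cases a; cases b) auto

lemma prefix_single_neq_WEnd [simp]: "prefix [a] X \<noteq> WEnd" "WEnd \<noteq> prefix [a] X"
  by (cases a; simp)+

lemma siso_prefix_cases:
  obtains "W = WEnd" | a W' where "W = prefix [a] W'"
proof (cases W)
  case (WIn p l S W')
  then have "W = prefix [AIn p l S] W'" by simp
  then show ?thesis using that by blast
next
  case (WOut p l S W')
  then have "W = prefix [AOut p l S] W'" by simp
  then show ?thesis using that by blast
qed (use that in blast)

lemma prefix_eq_prefix_snocE:
  assumes "prefix A X = prefix B (prefix [a] Y)"
  obtains C where "B = A @ C" "X = prefix (C @ [a]) Y"
    | C where "A = B @ a # C" "Y = prefix C X"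
  using assms
proof (induction A arbitrary: B)
  case Nil
  then show ?case by simp
next
  case (Cons c A)
  show ?case
  proof (cases B)
    case Nil
    with Cons.prems show ?thesis by simp
  next
    case (Cons b B')
    with Cons.prems(3) have "prefix A X = prefix B' (prefix [a] Y)" by simp
    with Cons.IH[of B'] Cons.prems(1,2) Cons.prems(3) \<open>B = b # B'\<close> show ?thesis by auto
  qed
qed

lemma act_simps [simp]:
  "act WEnd = {}"
  "act (WIn q l S W) = insert (InSym q) (act W)"
  "act (WOut q l S W) = insert (OutSym q) (act W)"
  by (auto simp: act_def elim: in_act.cases intro: in_act.intros)

lemma act_prefix: "act (prefix A W) = action_symbol ` set A \<union> act W"
proof (induction A)
  case (Cons a A)
  then show ?case by (cases a) auto
qed simp

lemma in_act_prefix_induct [consumes 1, case_names head tail]: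
  assumes "in_act c W"
    and head: "\<And>a W. P (action_symbol a) (prefix [a] W)"
    and tail: "\<And>c a W. in_act c W \<Longrightarrow> P c W \<Longrightarrow> P c (prefix [a] W)"
  shows "P c W"
  using assms(1)
proof induction
  case (1 p l S W)
  show ?case using head[of "AIn p l S" W] by simp
next
  case (2 p l S W)
  show ?case using head[of "AOut p l S" W] by simp
next
  case (3 c W q l S)
  show ?case using tail[of c W "AIn q l S"] 3 by simp
next
  case (4 c W q l S)
  show ?case using tail[of c W "AOut q l S"] 4 by simp
qed


section \<open>Refinement of SISO trees\<close>

fun action_refines :: "('p, 'l) action \<Rightarrow> ('p, 'l) action \<Rightarrow> bool" where
  "action_refines (AIn p l S) (AIn p' l' S') \<longleftrightarrow> p' = p \<and> l' = l \<and> subsort S' S"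
| "action_refines (AOut p l S) (AOut p' l' S') \<longleftrightarrow> p' = p \<and> l' = l \<and> subsort S S'"
| "action_refines _ _ \<longleftrightarrow> False"

lemma action_refines_symbol: "action_refines a a' \<Longrightarrow> action_symbol a' = action_symbol a"
  by (cases a; cases a') auto

lemma action_refines_label: "action_refines a a' \<Longrightarrow> action_label a' = action_label a"
  by (cases a; cases a') auto

lemma action_refines_refl: "action_refines a a"
  by (cases a) (auto simp: subsort_def)

lemma action_refines_trans: "action_refines a b \<Longrightarrow> action_refines b c \<Longrightarrow> action_refines a c"
  by (cases a; cases b; cases c) (auto simp: subsort_def)

lemma action_refines_AIn_iff:
  "action_refines (AIn p l S) b \<longleftrightarrow> (\<exists>S'. b = AIn p l S' \<and> subsort S' S)"
  by (cases b) auto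

lemma refines_WEnd_iff [simp]: "refines WEnd W \<longleftrightarrow> W = WEnd"
  by (auto elim: refines.cases intro: refines.ref_end)

lemma refines_Cons_inv:
  assumes "refines (prefix [a] W) Z"
  obtains A :: "('p, 'l) action list" and a' Z' where "Z = prefix (A @ [a']) Z'"
    "overtaking (action_symbol a) A" "action_refines a a'" "refines W (prefix A Z')"
    "A \<noteq> [] \<Longrightarrow> act W = act (prefix A Z')"
proof (cases a)
  case (AIn p l S)
  from assms AIn have "refines (WIn p l S W) Z" by simp
  then show ?thesis
  proof cases
    case (ref_in S' W')
    then show ?thesis using that[of "[]" "AIn p l S'"] AIn by simp
  next
    case (ref_in_A A S' W')
    then show ?thesis using that[of A "AIn p l S'"] AIn by (simp add: is_A_iff)
  qed
next
  case (AOut p l S)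
  from assms AOut have "refines (WOut p l S W) Z" by simp
  then show ?thesis
  proof cases
    case (ref_out S' W')
    then show ?thesis using that[of "[]" "AOut p l S'"] AOut by simp
  next
    case (ref_out_B B S' W')
    then show ?thesis using that[of B "AOut p l S'"] AOut by (simp add: is_B_iff)
  qed
qed

lemma in_act_refines: "in_act c W \<Longrightarrow> refines W W' \<Longrightarrow> c \<in> act W'"
proof (induction arbitrary: W' rule: in_act_prefix_induct)
  case (head a W)
  then obtain A a' Z where "W' = prefix (A @ [a']) Z" "action_refines a a'"
    by (elim refines_Cons_inv)
  then show ?case by (simp add: act_prefix action_refines_symbol)
next
  case (tail c a W)
  then obtain A a' Z where "W' = prefix (A @ [a']) Z" "refines W (prefix A Z)"
    by (elim refines_Cons_inv)
  with tail.IH[of "prefix A Z"] show ?case by (simp add: act_prefix)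
qed

text \<open>The converse inclusion needs the side condition on \<open>act\<close> in the rules with
  anticipated actions: there one step of the refined tree is matched by several steps.\<close>

lemma in_act_refines_rev: "in_act c W' \<Longrightarrow> refines W W' \<Longrightarrow> c \<in> act W"
proof (induction arbitrary: W rule: in_act_prefix_induct)
  case (head d W0')
  obtain b W0 where W: "W = prefix [b] W0"
    using head.prems by (cases W rule: siso_prefix_cases) auto
  with head.prems have "refines (prefix [b] W0) (prefix [d] W0')" by simp
  then obtain A b' Z where
    "prefix [d] W0' = prefix (A @ [b']) Z" "action_refines b b'"
    "A \<noteq> [] \<Longrightarrow> act W0 = act (prefix A Z)"
    by (elim refines_Cons_inv) blast
  with W show ?case
    by (cases A) (auto simp: act_prefix action_refines_symbol)
next
  case (tail c d W0')
  obtain b W0 where W: "W = prefix [b] W0"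
    using tail.prems by (cases W rule: siso_prefix_cases) auto
  with tail.prems have "refines (prefix [b] W0) (prefix [d] W0')" by simp
  then obtain A b' Z where
    "prefix [d] W0' = prefix (A @ [b']) Z" "action_refines b b'" "refines W0 (prefix A Z)"
    "A \<noteq> [] \<Longrightarrow> act W0 = act (prefix A Z)"
    by (elim refines_Cons_inv) blast
  moreover have "c \<in> act W0'" using tail.hyps by (simp add: act_def)
  ultimately show ?case using W tail.IH[of W0]
    by (cases A) (auto simp: act_prefix action_refines_symbol)
qed

lemma refines_act: "refines W W' \<Longrightarrow> act W = act W'"
  using in_act_refines in_act_refines_rev unfolding act_def by blast

lemma refines_Cons_prefixI:
  assumes "overtaking (action_symbol a) A" "action_refines a a'" "refines W (prefix A W')"
  shows "refines (prefix [a] W) (prefix (A @ [a']) W')"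
proof (cases "A = []")
  case True
  with assms show ?thesis
    by (cases a; cases a') (auto intro: refines.ref_in refines.ref_out)
next
  case False
  with assms refines_act[OF assms(3)] show ?thesis
    by (cases a; cases a') (auto intro!: refines.ref_in_A refines.ref_out_B simp: is_A_iff is_B_iff)
qed


lemma refines_overtaken_inv:
  assumes "overtaking (action_symbol a) C" "refines (prefix (C @ [a]) Y) Z"
  obtains A :: "('p, 'l) action list" and a' Z' where "Z = prefix (A @ [a']) Z'"
    "overtaking (action_symbol a) A" "action_refines a a'" "refines (prefix C Y) (prefix A Z')"
proof -
  have "\<exists>A a' Z'. Z = prefix (A @ [a']) Z' \<and> overtaking (action_symbol a) A \<and> action_refines a a' \<and>
      refines (prefix C Y) (prefix A Z')"
    using assms
  proof (induction C arbitrary: Z)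
    case Nil
    then have "refines (prefix [a] Y) Z" by simp
    then obtain A a' Z' where "Z = prefix (A @ [a']) Z'" "overtaking (action_symbol a) A"
      "action_refines a a'" "refines Y (prefix A Z')"
      by (elim refines_Cons_inv) blast
    then show ?case by (intro exI[of _ A] exI[of _ a'] exI[of _ Z']) simp
  next
    case (Cons c C)
    from Cons.prems(2) have "refines (prefix [c] (prefix (C @ [a]) Y)) Z"
      by (simp only: prefix_single_prefix append_Cons)
    then obtain A c' Z0 where Z: "Z = prefix (A @ [c']) Z0" and A: "overtaking (action_symbol c) A"
      and c': "action_refines c c'" and rest: "refines (prefix (C @ [a]) Y) (prefix A Z0)"
      by (elim refines_Cons_inv)
    from Cons.IH[OF _ rest] Cons.prems(1) obtain A'' a' Z'' where
      A'': "prefix A Z0 = prefix A'' (prefix [a'] Z'')" "overtaking (action_symbol a) A''"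
      and a': "action_refines a a'" and IH: "refines (prefix C Y) (prefix A'' Z'')"
      by auto
    have c_a: "may_overtake (action_symbol c') (action_symbol a)"
      using Cons.prems(1) c' by (simp add: action_refines_symbol)
    from A''(1) show ?case
    proof (cases rule: prefix_eq_prefix_snocE)
      txt \<open>\<open>a'\<close> occurs after \<open>c'\<close>, so \<open>c'\<close> joins the actions anticipated before \<open>a'\<close>.\<close>
      case (1 D)
      have "refines (prefix [c] (prefix C Y)) (prefix (A @ [c']) (prefix D Z''))"
        using refines_Cons_prefixI[OF A c'] IH 1 by simp
      then have "refines (prefix (c # C) Y) (prefix (A @ [c'] @ D) Z'')"
        by (simp only: prefix_single_prefix prefix_append append_Cons append_Nil)
      moreover have "Z = prefix ((A @ [c'] @ D) @ [a']) Z''" using Z 1 by simp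
      ultimately show ?thesis using A''(2) 1 c_a a'
        by (intro exI[of _ "A @ [c'] @ D"] exI[of _ a'] exI[of _ Z'']) simp
    next
      txt \<open>\<open>a'\<close> was anticipated before \<open>c'\<close>.\<close>
      case (2 D)
      have "overtaking (action_symbol c) (A'' @ D)" using A 2 by simp
      from refines_Cons_prefixI[OF this c', of "prefix C Y" Z0]
      have "refines (prefix (c # C) Y) (prefix A'' (prefix (D @ [c']) Z0))"
        using IH 2 by (simp only: prefix_single_prefix prefix_append)
      moreover have "Z = prefix (A'' @ [a']) (prefix (D @ [c']) Z0)" using Z 2 by simp
      ultimately show ?thesis using A''(2) a'
        by (intro exI[of _ A''] exI[of _ a'] exI[of _ "prefix (D @ [c']) Z0"]) simp
    qed
  qed
  with that show ?thesis by blast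
qed

lemma refines_coinduct_prefix [consumes 1, case_names refines]:
  assumes "R W W'"
    and step: "\<And>W W'. R W W' \<Longrightarrow> (W = WEnd \<and> W' = WEnd) \<or>
      (\<exists>a X A a' X'. W = prefix [a] X \<and> W' = prefix (A @ [a']) X' \<and>
         overtaking (action_symbol a) A \<and> action_refines a a' \<and> act X = act (prefix A X') \<and>
         (R X (prefix A X') \<or> refines X (prefix A X')))"
  shows "refines W W'"
  using assms(1)
proof (coinduction arbitrary: W W' rule: refines.coinduct)
  case (refines W W')
  from step[OF this] consider "W = WEnd" "W' = WEnd"
    | a X A a' X' where "W = prefix [a] X" "W' = prefix (A @ [a']) X'"
      "overtaking (action_symbol a) A" "action_refines a a'" "act X = act (prefix A X')"
      "R X (prefix A X') \<or> refines X (prefix A X')"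
    by blast
  then show ?case
  proof cases
    case (2 a X A a' X')
    show ?thesis
    proof (cases a)
      case (AIn p l S)
      with 2 obtain S' where "a' = AIn p l S'" "subsort S' S" by (cases a') auto
      with 2 AIn show ?thesis by (cases "A = []") (simp, force simp: is_A_iff)
    next
      case (AOut p l S)
      with 2 obtain S' where "a' = AOut p l S'" "subsort S S'" by (cases a') auto
      with 2 AOut show ?thesis by (cases "A = []") (simp, force simp: is_B_iff)
    qed
  qed simp
qed

lemma refines_refl: "refines W W"
proof -
  have "W = W" ..
  then show ?thesis
  proof (coinduction arbitrary: W rule: refines_coinduct_prefix)
    case (refines W)
    show ?case
    proof (cases W rule: siso_prefix_cases)
      case (2 a X)
      then show ?thesis
        by (intro disjI2 exI[of _ a] exI[of _ X] exI[of _ "[]"]) (simp add: action_refines_refl)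
    qed simp
  qed
qed

lemma refines_trans:
  assumes "refines X Y" "refines Y Z"
  shows "refines X Z"
proof -
  from assms have "\<exists>Y. refines X Y \<and> refines Y Z" by blast
  then show ?thesis
  proof (coinduction arbitrary: X Z rule: refines_coinduct_prefix)
    case (refines X Z)
    then obtain Y where XY: "refines X Y" and YZ: "refines Y Z" by blast
    show ?case
    proof (cases X rule: siso_prefix_cases)
      case 1
      with XY YZ show ?thesis by simp
    next
      case (2 a X')
      with XY have "refines (prefix [a] X') Y" by simp
      then obtain A b Y' where Y: "Y = prefix (A @ [b]) Y'" and A: "overtaking (action_symbol a) A"
        and ab: "action_refines a b" and XY': "refines X' (prefix A Y')"
        by (elim refines_Cons_inv) blast
      from ab A have "overtaking (action_symbol b) A" by (simp add: action_refines_symbol)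
      then obtain A' c Z' where Z: "Z = prefix (A' @ [c]) Z'"
        and A': "overtaking (action_symbol b) A'" and bc: "action_refines b c"
        and YZ': "refines (prefix A Y') (prefix A' Z')"
        by (rule refines_overtaken_inv[OF _ YZ[unfolded Y]]) blast
      have act: "act X' = act (prefix A' Z')"
        using refines_act[OF XY'] refines_act[OF YZ'] by simp
      from A' ab have A'_a: "overtaking (action_symbol a) A'" by (simp add: action_refines_symbol)
      from ab bc have ac: "action_refines a c" by (rule action_refines_trans)
      with 2 Z act A'_a ac XY' YZ' show ?thesis by blast
    qed
  qed
qed

section \<open>Decompositions along a single path\<close>

lemma siso_to_stree_simps [simp]:
  "siso_to_stree WEnd = End"
  "siso_to_stree (WIn p l S W) = Bra p (fmupd l (S, siso_to_stree W) fmempty)"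
  "siso_to_stree (WOut p l S W) = Sel p (fmupd l (S, siso_to_stree W) fmempty)"
  by (subst siso_to_stree.code; simp add: fmmap_fmupd)+

lemma fmupd_fmempty_eq_iff: "fmupd l x fmempty = m \<longleftrightarrow> fmdom m = {|l|} \<and> fmlookup m l = Some x"
proof
  assume "fmdom m = {|l|} \<and> fmlookup m l = Some x"
  then show "fmupd l x fmempty = m"
    by (intro fmap_ext) (metis fmdom_notD fmupd_lookup fmempty_lookup finsert_iff fempty_iff)
qed auto

lemma fmupd_fmempty_inject [simp]: "fmupd l x fmempty = fmupd l' y fmempty \<longleftrightarrow> l = l' \<and> x = y"
  by (auto simp: fmupd_fmempty_eq_iff)

lemma fmfilter_eq_single: "fmlookup m l = Some x \<Longrightarrow> fmfilter (\<lambda>l'. l' = l) m = fmupd l x fmempty"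
  by (rule fmap_ext) auto

inductive_simps so_dec_End_iff [simp]: "so_dec End U"
inductive_simps so_dec_to_End_iff [simp]: "so_dec T End"
inductive_simps so_dec_Bra_iff: "so_dec (Bra p m) U"
inductive_simps so_dec_Sel_iff: "so_dec (Sel p m) U"
inductive_simps so_dec_to_Bra_iff: "so_dec T (Bra p m)"
inductive_simps so_dec_to_Sel_iff: "so_dec T (Sel p m)"

inductive_simps si_dec_End_iff [simp]: "si_dec End V"
inductive_simps si_dec_to_End_iff [simp]: "si_dec T End"
inductive_simps si_dec_Bra_iff: "si_dec (Bra p m) V"
inductive_simps si_dec_Sel_iff: "si_dec (Sel p m) V"
inductive_simps si_dec_to_Bra_iff: "si_dec T (Bra p m)"
inductive_simps si_dec_to_Sel_iff: "si_dec T (Sel p m)"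

inductive_simps wf_stree_Bra_iff: "wf_stree (Bra p m)"
inductive_simps wf_stree_Sel_iff: "wf_stree (Sel p m)"

lemma fmupd_fmempty_rel_iff:
  "fmdom (fmupd l (S, U) fmempty) = fmdom m \<and>
     (\<forall>l' S' T. fmlookup m l' = Some (S', T) \<longrightarrow>
        (\<exists>U'. fmlookup (fmupd l (S, U) fmempty) l' = Some (S', U') \<and> P T U')) \<longleftrightarrow>
   (\<exists>V. m = fmupd l (S, V) fmempty \<and> P V U)"
proof
  assume *: "fmdom (fmupd l (S, U) fmempty) = fmdom m \<and>
     (\<forall>l' S' T. fmlookup m l' = Some (S', T) \<longrightarrow>
        (\<exists>U'. fmlookup (fmupd l (S, U) fmempty) l' = Some (S', U') \<and> P T U'))"
  then have "l |\<in>| fmdom m" by auto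
  then obtain S' V where lk: "fmlookup m l = Some (S', V)"
    by (auto simp: fmlookup_dom_iff)
  with * obtain U' where "fmlookup (fmupd l (S, U) fmempty) l = Some (S', U')" "P V U'"
    by blast
  then have "S' = S" "P V U" by simp_all
  with * lk show "\<exists>V. m = fmupd l (S, V) fmempty \<and> P V U"
    by (metis fmupd_fmempty_eq_iff fmdom_fmupd fmdom_empty)
qed auto

lemma so_dec_to_single_iff [simp]:
  "so_dec V (Bra p (fmupd l (S, U) fmempty)) \<longleftrightarrow>
     (\<exists>V0. V = Bra p (fmupd l (S, V0) fmempty) \<and> so_dec V0 U)"
  "so_dec V (Sel p (fmupd l (S, U) fmempty)) \<longleftrightarrow>
     (\<exists>m V0. V = Sel p m \<and> fmlookup m l = Some (S, V0) \<and> so_dec V0 U)"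
  unfolding so_dec_to_Bra_iff fmupd_fmempty_rel_iff by (auto simp: so_dec_to_Sel_iff)

lemma si_dec_to_single_iff [simp]:
  "si_dec V (Sel p (fmupd l (S, U) fmempty)) \<longleftrightarrow>
     (\<exists>V0. V = Sel p (fmupd l (S, V0) fmempty) \<and> si_dec V0 U)"
  "si_dec V (Bra p (fmupd l (S, U) fmempty)) \<longleftrightarrow>
     (\<exists>m V0. V = Bra p m \<and> fmlookup m l = Some (S, V0) \<and> si_dec V0 U)"
  unfolding si_dec_to_Sel_iff fmupd_fmempty_rel_iff by (auto simp: si_dec_to_Bra_iff)

lemma so_dec_to_Bra_lookup:
  assumes "so_dec T (Bra p mu)" "fmlookup mu l = Some (S, U)"
  obtains m T0 where "T = Bra p m" "fmlookup m l = Some (S, T0)" "so_dec T0 U"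
proof -
  from assms(1) obtain m where T: "T = Bra p m" and dom: "fmdom mu = fmdom m"
    and sub: "\<forall>l S T. fmlookup m l = Some (S, T) \<longrightarrow>
      (\<exists>U'. fmlookup mu l = Some (S, U') \<and> so_dec T U')"
    by (auto simp: so_dec_to_Bra_iff)
  from assms(2) dom obtain S' T0 where lk: "fmlookup m l = Some (S', T0)"
    by (metis fmdomI fmlookup_dom_iff surj_pair)
  with sub obtain U' where "fmlookup mu l = Some (S', U')" "so_dec T0 U'" by blast
  with assms(2) T lk that show ?thesis by simp
qed

lemma si_dec_to_Sel_lookup:
  assumes "si_dec T (Sel p mv)" "fmlookup mv l = Some (S, V)"
  obtains m T0 where "T = Sel p m" "fmlookup m l = Some (S, T0)" "si_dec T0 V"
proof -
  from assms(1) obtain m where T: "T = Sel p m" and dom: "fmdom mv = fmdom m"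
    and sub: "\<forall>l S T. fmlookup m l = Some (S, T) \<longrightarrow>
      (\<exists>V'. fmlookup mv l = Some (S, V') \<and> si_dec T V')"
    by (auto simp: si_dec_to_Sel_iff)
  from assms(2) dom obtain S' T0 where lk: "fmlookup m l = Some (S', T0)"
    by (metis fmdomI fmlookup_dom_iff surj_pair)
  with sub obtain V' where "fmlookup mv l = Some (S', V')" "si_dec T0 V'" by blast
  with assms(2) T lk that show ?thesis by simp
qed

lemma so_dec_siso_coinduct [consumes 1, case_names so_dec]:
  assumes "R V W"
    and step: "\<And>V W. R V W \<Longrightarrow> (V = End \<and> W = WEnd) \<or>
      (\<exists>p l S V0 W0. V = Bra p (fmupd l (S, V0) fmempty) \<and> W = WIn p l S W0 \<and> R V0 W0) \<or>
      (\<exists>p m l S V0 W0. V = Sel p m \<and> fmlookup m l = Some (S, V0) \<and> W = WOut p l S W0 \<and> R V0 W0)"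
  shows "so_dec V (siso_to_stree W)"
  using assms(1)
proof (coinduction arbitrary: V W rule: so_dec.coinduct)
  case (so_dec V W)
  from step[OF this] show ?case
  proof (elim disjE exE conjE)
    fix p l S V0 W0
    assume "V = Bra p (fmupd l (S, V0) fmempty)" "W = WIn p l S W0" "R V0 W0"
    then show ?case by auto
  next
    fix p m l S V0 W0
    assume "V = Sel p m" "fmlookup m l = Some (S, V0)" "W = WOut p l S W0" "R V0 W0"
    then show ?case by auto
  qed simp
qed

lemma si_dec_siso_coinduct [consumes 1, case_names si_dec]:
  assumes "R V W"
    and step: "\<And>V W. R V W \<Longrightarrow> (V = End \<and> W = WEnd) \<or>
      (\<exists>p m l S V0 W0. V = Bra p m \<and> fmlookup m l = Some (S, V0) \<and> W = WIn p l S W0 \<and> R V0 W0) \<or>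
      (\<exists>p l S V0 W0. V = Sel p (fmupd l (S, V0) fmempty) \<and> W = WOut p l S W0 \<and> R V0 W0)"
  shows "si_dec V (siso_to_stree W)"
  using assms(1)
proof (coinduction arbitrary: V W rule: si_dec.coinduct)
  case (si_dec V W)
  from step[OF this] show ?case
  proof (elim disjE exE conjE)
    fix p m l S V0 W0
    assume "V = Bra p m" "fmlookup m l = Some (S, V0)" "W = WIn p l S W0" "R V0 W0"
    then show ?case by auto
  next
    fix p l S V0 W0
    assume "V = Sel p (fmupd l (S, V0) fmempty)" "W = WOut p l S W0" "R V0 W0"
    then show ?case by auto
  qed simp
qed

section \<open>Reflexivity\<close>

text \<open>Applied to \<open>U\<close> and \<open>V\<close> as in \<open>meet_path_cases\<close>, the \<open>SOME\<close> picks the only label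
  of a singleton map.\<close>

primcorec meet_path :: "('p, 'l) stree \<Rightarrow> ('p, 'l) stree \<Rightarrow> ('p, 'l) siso" where
  "meet_path U V = (case (U, V) of
      (Bra p mu, Bra _ mv) \<Rightarrow> (let l = (SOME l. l |\<in>| fmdom mv) in
         WIn p l (fst (the (fmlookup mv l)))
           (meet_path (snd (the (fmlookup mu l))) (snd (the (fmlookup mv l)))))
    | (Sel p mu, Sel _ mv) \<Rightarrow> (let l = (SOME l. l |\<in>| fmdom mu) in
         WOut p l (fst (the (fmlookup mu l)))
           (meet_path (snd (the (fmlookup mu l))) (snd (the (fmlookup mv l)))))
    | _ \<Rightarrow> WEnd)"

lemma meet_path_End: "meet_path End End = WEnd"
  by (subst meet_path.code) simp

lemma meet_path_Bra:
  "fmlookup mu l = Some (S', U0) \<Longrightarrow>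
    meet_path (Bra p mu) (Bra p (fmupd l (S, V0) fmempty)) = WIn p l S (meet_path U0 V0)"
  by (subst meet_path.code) simp

lemma meet_path_Sel:
  "fmlookup mv l = Some (S', V0) \<Longrightarrow>
    meet_path (Sel p (fmupd l (S, U0) fmempty)) (Sel p mv) = WOut p l S (meet_path U0 V0)"
  by (subst meet_path.code) simp

lemma meet_path_cases [consumes 2]:
  assumes "so_dec T U" "si_dec T V"
  obtains (End) "U = End" "V = End" "meet_path U V = WEnd"
  | (Bra) p mu l S T0 U0 V0 where "U = Bra p mu" "fmlookup mu l = Some (S, U0)"
      "V = Bra p (fmupd l (S, V0) fmempty)" "so_dec T0 U0" "si_dec T0 V0"
      "meet_path U V = WIn p l S (meet_path U0 V0)"
  | (Sel) p mv l S T0 U0 V0 where "U = Sel p (fmupd l (S, U0) fmempty)" "V = Sel p mv"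
      "fmlookup mv l = Some (S, V0)" "so_dec T0 U0" "si_dec T0 V0"
      "meet_path U V = WOut p l S (meet_path U0 V0)"
proof (cases T)
  case End
  with assms show ?thesis using that(1) by (simp add: meet_path_End)
next
  case (Bra p m)
  from assms(2) Bra obtain l S T0 V0 where V: "V = Bra p (fmupd l (S, V0) fmempty)"
    and lk: "fmlookup m l = Some (S, T0)" and "si_dec T0 V0"
    by (auto simp: si_dec_Bra_iff)
  moreover from assms(1) Bra lk obtain mu U0 where "U = Bra p mu" "fmlookup mu l = Some (S, U0)"
    and "so_dec T0 U0"
    by (force simp: so_dec_Bra_iff)
  ultimately show ?thesis using that(2) by (simp add: meet_path_Bra)
next
  case (Sel p m)
  from assms(1) Sel obtain l S T0 U0 where U: "U = Sel p (fmupd l (S, U0) fmempty)"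
    and lk: "fmlookup m l = Some (S, T0)" and "so_dec T0 U0"
    by (auto simp: so_dec_Sel_iff)
  moreover from assms(2) Sel lk obtain mv V0 where "V = Sel p mv" "fmlookup mv l = Some (S, V0)"
    and "si_dec T0 V0"
    by (force simp: si_dec_Sel_iff)
  ultimately show ?thesis using that(3) by (simp add: meet_path_Sel)
qed

lemma si_dec_meet_path:
  fixes U V :: "('p, 'l) stree"
  assumes "so_dec T U" "si_dec T V"
  shows "si_dec U (siso_to_stree (meet_path U V))"
proof -
  define R where "R U' W \<longleftrightarrow> (\<exists>T V. so_dec T U' \<and> si_dec T V \<and> W = meet_path U' V)"
    for U' :: "('p, 'l) stree" and W
  have "R U (meet_path U V)" using assms unfolding R_def by blast
  then show ?thesis
  proof (coinduct rule: si_dec_siso_coinduct)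
    case (si_dec U W)
    then obtain T V where "so_dec T U" "si_dec T V" "W = meet_path U V" unfolding R_def by blast
    then show ?case
    proof (cases rule: meet_path_cases)
      case (Bra p mu l S T0 U0 V0)
      then have "R U0 (meet_path U0 V0)" unfolding R_def by blast
      with Bra \<open>W = meet_path U V\<close> show ?thesis
        by auto
    next
      case (Sel p mv l S T0 U0 V0)
      then have "R U0 (meet_path U0 V0)" unfolding R_def by blast
      with Sel \<open>W = meet_path U V\<close> show ?thesis
        by auto
    qed simp
  qed
qed

lemma so_dec_meet_path:
  fixes U V :: "('p, 'l) stree"
  assumes "so_dec T U" "si_dec T V"
  shows "so_dec V (siso_to_stree (meet_path U V))"
proof -
  define R where "R V' W \<longleftrightarrow> (\<exists>T U. so_dec T U \<and> si_dec T V' \<and> W = meet_path U V')"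
    for V' :: "('p, 'l) stree" and W
  have "R V (meet_path U V)" using assms unfolding R_def by blast
  then show ?thesis
  proof (coinduct rule: so_dec_siso_coinduct)
    case (so_dec V W)
    then obtain T U where "so_dec T U" "si_dec T V" "W = meet_path U V" unfolding R_def by blast
    then show ?case
    proof (cases rule: meet_path_cases)
      case (Bra p mu l S T0 U0 V0)
      then have "R V0 (meet_path U0 V0)" unfolding R_def by blast
      with Bra \<open>W = meet_path U V\<close> show ?thesis
        by auto
    next
      case (Sel p mv l S T0 U0 V0)
      then have "R V0 (meet_path U0 V0)" unfolding R_def by blast
      with Sel \<open>W = meet_path U V\<close> show ?thesis
        by auto
    qed simp
  qed
qed

lemma async_sub_refl: "async_sub T T"
  unfolding async_sub_def
  using si_dec_meet_path so_dec_meet_path refines_refl by blast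

section \<open>SO-paths of a common SI-tree\<close>

coinductive compatible :: "('p, 'l) siso \<Rightarrow> ('p, 'l) siso \<Rightarrow> bool" where
  "compatible WEnd WEnd"
| "compatible X Y \<Longrightarrow> compatible (WIn p l S X) (WIn p l S Y)"
| "compatible X Y \<Longrightarrow> compatible (WOut p l S X) (WOut p l S Y)"
| "l \<noteq> l' \<Longrightarrow> compatible (WOut p l S X) (WOut p l' S' Y)"

lemma compatible_Cons_iff:
  "compatible (prefix [a] X) (prefix [b] Y) \<longleftrightarrow>
     (a = b \<and> compatible X Y) \<or> (\<exists>p l S l' S'. a = AOut p l S \<and> b = AOut p l' S' \<and> l \<noteq> l')"
  by (cases a; cases b) (auto elim: compatible.cases intro: compatible.intros)

lemma compatible_Cons_symbol:
  "compatible (prefix [a] X) (prefix [b] Y) \<Longrightarrow> action_symbol b = action_symbol a"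
  by (auto simp: compatible_Cons_iff)

lemma compatible_prefix: "compatible X Y \<Longrightarrow> compatible (prefix A X) (prefix A Y)"
proof (induction A)
  case (Cons a A)
  then show ?case
    using compatible_Cons_iff[of a "prefix A X" a "prefix A Y"] by (simp add: prefix_single_prefix)
qed simp

lemma so_dec_paths_compatible:
  assumes "so_dec V (siso_to_stree W)" "so_dec V (siso_to_stree W')"
  shows "compatible W W'"
  using assms
proof (coinduction arbitrary: V W W' rule: compatible.coinduct)
  case (compatible V W W')
  then show ?case
    by (cases W; cases W') auto
qed

lemma compatible_overtaken:
  assumes "compatible (prefix (A @ [a]) Z) (prefix (A' @ [a']) Z')"
    and "overtaking (action_symbol a) A" "overtaking (action_symbol a) A'"
    and "action_symbol a' = action_symbol a" "action_label a' = action_label a"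
  shows "compatible (prefix A Z) (prefix A' Z')"
  using assms
proof (induction A arbitrary: A')
  case Nil
  show ?case
  proof (cases A')
    case Nil
    with Nil.prems(1,5) show ?thesis by (auto simp: compatible_Cons_iff)
  next
    case (Cons c' A'')
    with Nil.prems(1) have "action_symbol c' = action_symbol a"
      by (simp add: compatible_Cons_symbol)
    with Nil.prems(3) Cons show ?thesis by (simp add: may_overtake_irrefl)
  qed
next
  case (Cons c A)
  show ?case
  proof (cases A')
    case Nil
    with Cons.prems(1,4) have "action_symbol c = action_symbol a"
      by (metis append_Cons append_Nil prefix_append compatible_Cons_symbol)
    with Cons.prems(2) show ?thesis by (simp add: may_overtake_irrefl)
  next
    case (Cons c' A'')
    with Cons.prems(1)
    have "compatible (prefix [c] (prefix (A @ [a]) Z)) (prefix [c'] (prefix (A'' @ [a']) Z'))"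
      by (simp add: prefix_single_prefix)
    then consider "c = c'" "compatible (prefix (A @ [a]) Z) (prefix (A'' @ [a']) Z')"
      | "compatible (prefix [c] (prefix A Z)) (prefix [c'] (prefix A'' Z'))"
      by (auto simp: compatible_Cons_iff)
    then show ?thesis
    proof cases
      case 1
      with Cons.IH[of A''] Cons.prems \<open>A' = c' # A''\<close> have "compatible (prefix A Z) (prefix A'' Z')"
        by simp
      from compatible_prefix[OF this, of "[c]"] 1 \<open>A' = c' # A''\<close> show ?thesis
        by (simp add: prefix_single_prefix)
    next
      case 2
      with \<open>A' = c' # A''\<close> show ?thesis by (simp add: prefix_single_prefix)
    qed
  qed
qed

lemma compatible_input_label:
  assumes "compatible (prefix A (WIn p l S Z)) (prefix A' (WIn p l' S' Z'))"
    and "overtaking (InSym p) A" "overtaking (InSym p) A'"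
  shows "l' = l"
  using assms
proof (induction A arbitrary: A')
  case Nil
  show ?case
  proof (cases A')
    case Nil
    with Nil.prems(1) show ?thesis by (auto elim: compatible.cases)
  next
    case (Cons c' A'')
    with Nil.prems(1) have "action_symbol c' = InSym p"
      using compatible_Cons_symbol[of "AIn p l S" Z c' "prefix A'' (WIn p l' S' Z')"]
      by (simp add: prefix_single_prefix)
    with Nil.prems(3) Cons show ?thesis by (simp add: may_overtake_irrefl)
  qed
next
  case (Cons c A)
  show ?case
  proof (cases A')
    case Nil
    with Cons.prems(1) have "action_symbol c = InSym p"
      using compatible_Cons_symbol[of c "prefix A (WIn p l S Z)" "AIn p l' S'" Z']
      by (simp add: prefix_single_prefix)
    with Cons.prems(2) show ?thesis by (simp add: may_overtake_irrefl)
  next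
    case (Cons c' A'')
    from Cons.prems(2) obtain q m R where "c = AIn q m R" by (cases c) auto
    from Cons.prems(1) \<open>A' = c' # A''\<close>
    have "compatible (prefix [c] (prefix A (WIn p l S Z)))
        (prefix [c'] (prefix A'' (WIn p l' S' Z')))"
      by (simp add: prefix_single_prefix)
    with \<open>c = AIn q m R\<close> have "c' = c"
      "compatible (prefix A (WIn p l S Z)) (prefix A'' (WIn p l' S' Z'))"
      unfolding compatible_Cons_iff by auto
    with Cons.IH[of A''] Cons.prems(2,3) \<open>A' = c' # A''\<close> show ?thesis by simp
  qed
qed

lemma refines_input_label_unique:
  assumes "compatible Z Z'"
    and "refines (prefix h (WIn p l S X)) Z" "refines (prefix h (WIn p l' S' Y)) Z'"
  shows "l' = l"
  using assms
proof (induction h arbitrary: Z Z')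
  case Nil
  from Nil.prems(2) have "refines (prefix [AIn p l S] X) Z" by simp
  then obtain A b Z0 where Z: "Z = prefix (A @ [b]) Z0" "overtaking (InSym p) A"
    "action_refines (AIn p l S) b"
    by (elim refines_Cons_inv) simp
  from Nil.prems(3) have "refines (prefix [AIn p l' S'] Y) Z'" by simp
  then obtain A' b' Z0' where Z': "Z' = prefix (A' @ [b']) Z0'" "overtaking (InSym p) A'"
    "action_refines (AIn p l' S') b'"
    by (elim refines_Cons_inv) simp
  from Z Z' Nil.prems(1) show ?case
    by (auto simp: action_refines_AIn_iff intro: compatible_input_label)
next
  case (Cons c h)
  from Cons.prems(2) have "refines (prefix [c] (prefix h (WIn p l S X))) Z"
    by (simp add: prefix_single_prefix)
  then obtain A b Z0 where Z: "Z = prefix (A @ [b]) Z0" "overtaking (action_symbol c) A"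
    "action_refines c b" "refines (prefix h (WIn p l S X)) (prefix A Z0)"
    by (elim refines_Cons_inv) blast
  from Cons.prems(3) have "refines (prefix [c] (prefix h (WIn p l' S' Y))) Z'"
    by (simp add: prefix_single_prefix)
  then obtain A' b' Z0' where Z': "Z' = prefix (A' @ [b']) Z0'" "overtaking (action_symbol c) A'"
    "action_refines c b'" "refines (prefix h (WIn p l' S' Y)) (prefix A' Z0')"
    by (elim refines_Cons_inv) blast
  have "compatible (prefix A Z0) (prefix A' Z0')"
    using Cons.prems(1) Z Z'
    by (intro compatible_overtaken[of A b Z0 A' b'])
      (auto simp: action_refines_symbol action_refines_label)
  from Cons.IH[OF this Z(4) Z'(4)] show ?case .
qed

section \<open>Transitivity\<close>

definition matchable_input :: "('p, 'l) stree \<Rightarrow> ('p, 'l) action list \<Rightarrow> 'p \<Rightarrow> 'l \<Rightarrow> bool" where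
  "matchable_input V h p l \<longleftrightarrow>
     (\<exists>S X W. refines (prefix h (WIn p l S X)) W \<and> so_dec V (siso_to_stree W))"

lemma matchable_input_unique: "matchable_input V h p l \<Longrightarrow> matchable_input V h p l' \<Longrightarrow> l' = l"
  unfolding matchable_input_def by (metis so_dec_paths_compatible refines_input_label_unique)

definition choose_label :: "('l, 'a) fmap \<Rightarrow> ('l \<Rightarrow> bool) \<Rightarrow> 'l" where
  "choose_label m P = (SOME l. l |\<in>| fmdom m \<and> (P l \<or> (\<forall>l'. l' |\<in>| fmdom m \<longrightarrow> \<not> P l')))"

lemma choose_label_in_fmdom: "fmdom m \<noteq> {||} \<Longrightarrow> choose_label m P |\<in>| fmdom m"
proof -
  assume "fmdom m \<noteq> {||}"
  then have "\<exists>l. l |\<in>| fmdom m \<and> (P l \<or> (\<forall>l'. l' |\<in>| fmdom m \<longrightarrow> \<not> P l'))"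
    by auto
  then show ?thesis
    unfolding choose_label_def by (rule someI2_ex) blast
qed

lemma choose_label_eq:
  assumes "l |\<in>| fmdom m" "P l" "\<And>l'. P l' \<Longrightarrow> l' = l"
  shows "choose_label m P = l"
  unfolding choose_label_def
proof (rule someI2)
  show "l |\<in>| fmdom m \<and> (P l \<or> (\<forall>l'. l' |\<in>| fmdom m \<longrightarrow> \<not> P l'))"
    using assms(1,2) by blast
next
  fix l' assume "l' |\<in>| fmdom m \<and> (P l' \<or> (\<forall>l'. l' |\<in>| fmdom m \<longrightarrow> \<not> P l'))"
  with assms show "l' = l" by blast
qed

primcorec si_matching ::
  "('p, 'l) stree \<Rightarrow> ('p, 'l) action list \<Rightarrow> ('p, 'l) stree \<Rightarrow> ('p, 'l) stree"
where
  "si_matching V h T = (case T of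
      End \<Rightarrow> End
    | Bra p m \<Rightarrow> (let l = choose_label m (matchable_input V h p) in
        Bra p (fmmap (\<lambda>(S, T0). (S, si_matching V (h @ [AIn p l S]) T0))
          (fmfilter (\<lambda>l'. l' = l) m)))
    | Sel p m \<Rightarrow>
        Sel p (fmmap (\<lambda>(l, S, T0). (S, si_matching V (h @ [AOut p l S]) T0)) (fmmap_keys Pair m)))"

lemma si_matching_Bra:
  assumes "fmlookup m l = Some (S, T0)" "choose_label m (matchable_input V h p) = l"
  shows "si_matching V h (Bra p m) =
    Bra p (fmupd l (S, si_matching V (h @ [AIn p l S]) T0) fmempty)"
  by (subst si_matching.code) (simp add: assms fmfilter_eq_single fmmap_fmupd)

lemma si_matching_Sel:
  "si_matching V h (Sel p m) =
    Sel p (fmmap_keys (\<lambda>l (S, T0). (S, si_matching V (h @ [AOut p l S]) T0)) m)"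
  by (subst si_matching.code)
    (auto intro!: fmap_ext simp: option.map_comp comp_def split: prod.splits)

lemma si_dec_si_matching: "wf_stree T \<Longrightarrow> si_dec T (si_matching V h T)"
proof (coinduction arbitrary: T h)
  case (si_dec T h)
  show ?case
  proof (cases T)
    case (Bra p m)
    with si_dec have "fmdom m \<noteq> {||}" by (simp add: wf_stree_Bra_iff)
    then have "choose_label m (matchable_input V h p) |\<in>| fmdom m" by (rule choose_label_in_fmdom)
    then obtain l S T0 where l: "choose_label m (matchable_input V h p) = l"
      and lk: "fmlookup m l = Some (S, T0)"
      by (auto simp: fmlookup_dom_iff)
    moreover have "wf_stree T0" using si_dec Bra lk by (auto simp: wf_stree_Bra_iff)
    ultimately show ?thesis using Bra by (auto simp: si_matching_Bra)
  next
    case (Sel p m)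
    with si_dec show ?thesis by (auto simp: si_matching_Sel wf_stree_Sel_iff)
  qed simp
qed

coinductive path_of :: "('p, 'l) stree \<Rightarrow> ('p, 'l) siso \<Rightarrow> bool" where
  "path_of End WEnd"
| "fmlookup m l = Some (S, T) \<Longrightarrow> path_of T X \<Longrightarrow> path_of (Bra p m) (WIn p l S X)"
| "fmlookup m l = Some (S, T) \<Longrightarrow> path_of T X \<Longrightarrow> path_of (Sel p m) (WOut p l S X)"

lemma path_of_si_dec:
  assumes "so_dec T U" "si_dec U (siso_to_stree X)"
  shows "path_of T X"
  using assms
proof (coinduction arbitrary: T U X)
  case (path_of T U X)
  show ?case
  proof (cases X)
    case WEnd
    with path_of show ?thesis by simp
  next
    case (WIn p l S X0)
    with path_of obtain mu U0 where U: "U = Bra p mu" "fmlookup mu l = Some (S, U0)"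
      and X0: "si_dec U0 (siso_to_stree X0)"
      by auto
    with path_of obtain m T0 where "T = Bra p m" "fmlookup m l = Some (S, T0)" "so_dec T0 U0"
      by (auto elim: so_dec_to_Bra_lookup)
    with X0 WIn show ?thesis by auto
  next
    case (WOut p l S X0)
    with path_of obtain U0 where "U = Sel p (fmupd l (S, U0) fmempty)"
      and "si_dec U0 (siso_to_stree X0)"
      by auto
    with path_of WOut show ?thesis by auto
  qed
qed

lemma so_dec_si_matching:
  assumes "path_of T X" "refines (prefix h X) W" "so_dec V (siso_to_stree W)"
  shows "so_dec (si_matching V h T) (siso_to_stree X)"
proof -
  define R where "R V' X \<longleftrightarrow> (\<exists>T h W. V' = si_matching V h T \<and> path_of T X \<and>
      refines (prefix h X) W \<and> so_dec V (siso_to_stree W))" for V' X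
  have "R (si_matching V h T) X" using assms unfolding R_def by blast
  then show ?thesis
  proof (coinduct rule: so_dec_siso_coinduct)
    case (so_dec V' X)
    then obtain T h W where V': "V' = si_matching V h T" and "path_of T X"
      and W: "refines (prefix h X) W" "so_dec V (siso_to_stree W)"
      unfolding R_def by blast
    from \<open>path_of T X\<close> show ?case
    proof cases
      case 1
      with V' show ?thesis by simp
    next
      case (2 m l S T0 X0 p)
      then have "matchable_input V h p l"
        using W unfolding matchable_input_def by blast
      then have "choose_label m (matchable_input V h p) = l"
        using 2 by (intro choose_label_eq) (auto simp: fmdomI matchable_input_unique)
      then have "V' = Bra p (fmupd l (S, si_matching V (h @ [AIn p l S]) T0) fmempty)"
        using V' 2 by (simp add: si_matching_Bra)
      moreover have "R (si_matching V (h @ [AIn p l S]) T0) X0"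
        unfolding R_def using 2 W
        by (intro exI[of _ T0] exI[of _ "h @ [AIn p l S]"] exI[of _ W]) simp
      ultimately show ?thesis using 2 by auto
    next
      case (3 m l S T0 X0 p)
      have "R (si_matching V (h @ [AOut p l S]) T0) X0"
        unfolding R_def using 3 W
        by (intro exI[of _ T0] exI[of _ "h @ [AOut p l S]"] exI[of _ W]) simp
      with 3 V' show ?thesis by (auto simp: si_matching_Sel)
    qed
  qed
qed

fun siso_tail :: "('p, 'l) siso \<Rightarrow> ('p, 'l) siso" where
  "siso_tail WEnd = WEnd"
| "siso_tail (WIn p l S W) = W"
| "siso_tail (WOut p l S W) = W"

text \<open>Off the path \<open>W\<close> the guide is irrelevant, so every branch continues with its tail.\<close>

primcorec so_following :: "('p, 'l) stree \<Rightarrow> ('p, 'l) siso \<Rightarrow> ('p, 'l) stree" where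
  "so_following T W = (case T of
      End \<Rightarrow> End
    | Bra p m \<Rightarrow> Bra p (fmmap (\<lambda>(S, T0). (S, so_following T0 (siso_tail W))) m)
    | Sel p m \<Rightarrow> (let l = choose_label m (\<lambda>l. \<exists>q S W'. W = WOut q l S W') in
        Sel p (fmmap (\<lambda>(S, T0). (S, so_following T0 (siso_tail W))) (fmfilter (\<lambda>l'. l' = l) m))))"

lemma so_following_Bra:
  "so_following (Bra p m) W = Bra p (fmmap (\<lambda>(S, T0). (S, so_following T0 (siso_tail W))) m)"
  by (subst so_following.code) simp

lemma so_following_Sel:
  assumes "fmlookup m l = Some (S, T0)" "choose_label m (\<lambda>l. \<exists>q S W'. W = WOut q l S W') = l"
  shows "so_following (Sel p m) W = Sel p (fmupd l (S, so_following T0 (siso_tail W)) fmempty)"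
  by (subst so_following.code) (simp add: assms fmfilter_eq_single fmmap_fmupd)

lemma so_following_Sel_WOut:
  assumes "fmlookup m l = Some (S, T0)"
  shows "so_following (Sel p m) (WOut q l S' W) = Sel p (fmupd l (S, so_following T0 W) fmempty)"
proof -
  have "choose_label m (\<lambda>l'. \<exists>q S W'. WOut q l S' W = WOut q l' S W') = l"
    using assms by (intro choose_label_eq) (auto simp: fmdomI)
  with assms show ?thesis by (simp add: so_following_Sel)
qed

lemma so_dec_so_following: "wf_stree T \<Longrightarrow> so_dec T (so_following T W)"
proof (coinduction arbitrary: T W)
  case (so_dec T W)
  show ?case
  proof (cases T)
    case (Bra p m)
    with so_dec show ?thesis by (auto simp: so_following_Bra wf_stree_Bra_iff)
  next
    case (Sel p m)
    with so_dec have "fmdom m \<noteq> {||}" by (simp add: wf_stree_Sel_iff)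
    then have "choose_label m (\<lambda>l. \<exists>q S W'. W = WOut q l S W') |\<in>| fmdom m"
      by (rule choose_label_in_fmdom)
    then obtain l S T0 where l: "choose_label m (\<lambda>l. \<exists>q S W'. W = WOut q l S W') = l"
      and lk: "fmlookup m l = Some (S, T0)"
      by (auto simp: fmlookup_dom_iff)
    moreover have "wf_stree T0" using so_dec Sel lk by (auto simp: wf_stree_Sel_iff)
    ultimately show ?thesis using Sel by (auto simp: so_following_Sel)
  qed simp
qed

lemma siso_coinduct_prefix [consumes 1, case_names siso_eq]:
  assumes "R X Y"
    and step: "\<And>X Y. R X Y \<Longrightarrow> (X = WEnd \<and> Y = WEnd) \<or>
      (\<exists>a X' Y'. X = prefix [a] X' \<and> Y = prefix [a] Y' \<and> R X' Y')"
  shows "X = Y"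
  using assms(1)
proof (coinduction arbitrary: X Y rule: siso.coinduct)
  case (Eq_siso X Y)
  from step[OF this] show ?case
  proof (elim disjE exE conjE)
    fix a X' Y' assume "X = prefix [a] X'" "Y = prefix [a] Y'" "R X' Y'"
    then show ?case by (cases a) auto
  qed simp
qed

lemma so_following_path_cases [consumes 4]:
  assumes "si_dec T V" "so_dec V (siso_to_stree Y)" "so_dec V (siso_to_stree X)"
    and "si_dec (so_following T Y) (siso_to_stree X)"
  obtains "X = WEnd" "Y = WEnd"
  | a X0 Y0 T0 V0 where "X = prefix [a] X0" "Y = prefix [a] Y0" "si_dec T0 V0"
      "so_dec V0 (siso_to_stree Y0)" "so_dec V0 (siso_to_stree X0)"
      "si_dec (so_following T0 Y0) (siso_to_stree X0)"
proof (cases T)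
  case End
  with assms(1-3) show ?thesis using that(1) by (cases X; cases Y) auto
next
  case (Bra p m)
  with assms(1) obtain l S T0 V0 where V: "V = Bra p (fmupd l (S, V0) fmempty)"
    and lk: "fmlookup m l = Some (S, T0)" and "si_dec T0 V0"
    by (auto simp: si_dec_Bra_iff)
  have path: "\<exists>Z0. Z = WIn p l S Z0 \<and> so_dec V0 (siso_to_stree Z0)"
    if "so_dec V (siso_to_stree Z)" for Z
    using that V by (cases Z) auto
  from path[OF assms(2)] obtain Y0 where Y: "Y = WIn p l S Y0" "so_dec V0 (siso_to_stree Y0)"
    by blast
  from path[OF assms(3)] obtain X0 where X: "X = WIn p l S X0" "so_dec V0 (siso_to_stree X0)"
    by blast
  from assms(4) Bra X(1) Y(1) lk have "si_dec (so_following T0 Y0) (siso_to_stree X0)"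
    by (auto simp: so_following_Bra)
  with X Y \<open>si_dec T0 V0\<close> show ?thesis
    using that(2)[of "AIn p l S" X0 Y0] by simp
next
  case (Sel p m)
  with assms(1) obtain mv where V: "V = Sel p mv"
    by (auto simp: si_dec_Sel_iff)
  from assms(2) V obtain l S Y0 V0 where Y: "Y = WOut p l S Y0"
    and lkv: "fmlookup mv l = Some (S, V0)" and "so_dec V0 (siso_to_stree Y0)"
    by (cases Y) auto
  from assms(1) V lkv Sel obtain T0 where lk: "fmlookup m l = Some (S, T0)" and "si_dec T0 V0"
    by (auto elim: si_dec_to_Sel_lookup)
  with Y Sel have "so_following T Y = Sel p (fmupd l (S, so_following T0 Y0) fmempty)"
    by (simp add: so_following_Sel_WOut)
  with assms(4) obtain X0 where X: "X = WOut p l S X0"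
    "si_dec (so_following T0 Y0) (siso_to_stree X0)"
    by (cases X) auto
  with assms(3) V lkv have "so_dec V0 (siso_to_stree X0)" by auto
  with X Y \<open>si_dec T0 V0\<close> \<open>so_dec V0 (siso_to_stree Y0)\<close> show ?thesis
    using that(2)[of "AOut p l S" X0 Y0] by simp
qed

lemma so_following_path_eq:
  fixes X Y :: "('p, 'l) siso"
  assumes "si_dec T V" "so_dec V (siso_to_stree Y)" "so_dec V (siso_to_stree X)"
    and "si_dec (so_following T Y) (siso_to_stree X)"
  shows "X = Y"
proof -
  define R where "R X Y \<longleftrightarrow> (\<exists>T V. si_dec T V \<and> so_dec V (siso_to_stree Y) \<and>
      so_dec V (siso_to_stree X) \<and> si_dec (so_following T Y) (siso_to_stree X))"
    for X Y :: "('p, 'l) siso"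
  have "R X Y" using assms unfolding R_def by blast
  then show ?thesis
  proof (coinduct rule: siso_coinduct_prefix)
    case (siso_eq X Y)
    then obtain T V where "si_dec T V" "so_dec V (siso_to_stree Y)" "so_dec V (siso_to_stree X)"
      "si_dec (so_following T Y) (siso_to_stree X)"
      unfolding R_def by blast
    then show ?case
    proof (cases rule: so_following_path_cases)
      case (2 a X0 Y0 T0 V0)
      then have "R X0 Y0" unfolding R_def by blast
      with 2 show ?thesis by blast
    qed simp
  qed
qed

lemma async_sub_trans:
  assumes "wf_stree T2" "async_sub T1 T2" "async_sub T2 T3"
  shows "async_sub T1 T3"
  unfolding async_sub_def
proof (intro allI impI)
  fix U1 V3
  assume U1: "so_dec T1 U1" and V3: "si_dec T3 V3"
  let ?V2 = "si_matching V3 [] T2"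
  have V2: "si_dec T2 ?V2" using assms(1) by (rule si_dec_si_matching)
  with assms(2) U1 obtain W1 W2 where W1: "si_dec U1 (siso_to_stree W1)"
    and W2: "so_dec ?V2 (siso_to_stree W2)" and W12: "refines W1 W2"
    unfolding async_sub_def by blast
  let ?U2 = "so_following T2 W2"
  have U2: "so_dec T2 ?U2" using assms(1) by (rule so_dec_so_following)
  with assms(3) V3 obtain W2' W3 where W2': "si_dec ?U2 (siso_to_stree W2')"
    and W3: "so_dec V3 (siso_to_stree W3)" and W23: "refines W2' W3"
    unfolding async_sub_def by blast
  have "so_dec ?V2 (siso_to_stree W2')"
    using path_of_si_dec[OF U2 W2'] _ W3 by (rule so_dec_si_matching) (simp add: W23)
  from so_following_path_eq[OF V2 W2 this W2'] have "W2' = W2" .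
  with W12 W23 have "refines W1 W3" by (blast intro: refines_trans)
  with W1 W3 show "\<exists>W W'. si_dec U1 (siso_to_stree W) \<and> so_dec V3 (siso_to_stree W') \<and> refines W W'"
    by blast
qed

theorem lemma3p8:
  shows "(\<forall>T :: ('p, 'l) stree. wf_stree T \<longrightarrow> async_sub T T) \<and>
         (\<forall>T1 T2 T3 :: ('p, 'l) stree. wf_stree T1 \<longrightarrow> wf_stree T2 \<longrightarrow> wf_stree T3 \<longrightarrow>
            async_sub T1 T2 \<longrightarrow> async_sub T2 T3 \<longrightarrow> async_sub T1 T3)"
  using async_sub_refl async_sub_trans by blast

end
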